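(* Let $r\ge0$ and let $Q_i,P_i\in\mathfrak{gl}_m$, $i=0,\dots,r$, be canonical coordinates with Poisson brackets $\{P_i\overset{\otimes}{,}Q_j\}=\delta_{ij}\Pi$, $\{P_i\overset{\otimes}{,}P_j\}=\{Q_i\overset{\otimes}{,}Q_j\}=0$. Define $A_k=\sum_{i=0}^{r-k}Q_iP_{i+k}$ for $k=0,\dots,r$. Then $$\{A_k\overset{\otimes}{,}A_l\}=\begin{cases}-[\Pi,A_{k+l}\otimes\mathbb I],&k+l\le r,\\0,&k+l>r.\end{cases}$$
   Context: $\{X\overset{\otimes}{,}Y\}=\sum_{a,b,c,d}\{X_{ab},Y_{cd}\}E_{ab}\otimes E_{cd}$, $\Pi=\sum_{a,b}E_{ab}\otimes E_{ba}$ (permutation operator). The resulting bracket is the standard Lie–Poisson bracket on the dual of the Takiff algebra $\mathfrak{gl}_m[z]/z^{r+1}$, for elements $\sum_kA_kz^{-k-1}$. *)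

theory Defs
  imports Main
begin

definition is_poisson_bracket :: "('a::comm_ring_1 \<Rightarrow> 'a \<Rightarrow> 'a) \<Rightarrow> bool" where
  "is_poisson_bracket br \<longleftrightarrow>
     (\<forall>x y z. br (x + y) z = br x z + br y z) \<and>
     (\<forall>x y. br x y = - br y x) \<and>
     (\<forall>x y z. br x (y * z) = br x y * z + y * br x z) \<and>
     (\<forall>x y z. br x (br y z) + br y (br z x) + br z (br x y) = 0)"

text \<open>m x m matrices with entries in the Poisson algebra: functions of (row, column),
indices < m.  Elements of gl_m (x) gl_m: T a b c d is the coefficient of
E_ab (x) E_cd.\<close>

type_synonym 'a mat = "nat \<Rightarrow> nat \<Rightarrow> 'a"
type_synonym 'a tens = "nat \<Rightarrow> nat \<Rightarrow> nat \<Rightarrow> nat \<Rightarrow> 'a"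

definition mat_mult :: "nat \<Rightarrow> 'a::comm_ring_1 mat \<Rightarrow> 'a mat \<Rightarrow> 'a mat" where
  "mat_mult m X Y = (\<lambda>a b. \<Sum>e<m. X a e * Y e b)"

definition mat_id :: "'a::comm_ring_1 mat" where
  "mat_id = (\<lambda>a b. if a = b then 1 else 0)"

definition tens_bracket :: "('a \<Rightarrow> 'a \<Rightarrow> 'a) \<Rightarrow> 'a mat \<Rightarrow> 'a mat \<Rightarrow> 'a tens" where
  "tens_bracket br X Y = (\<lambda>a b c d. br (X a b) (Y c d))"

definition tens_prod :: "'a::comm_ring_1 mat \<Rightarrow> 'a mat \<Rightarrow> 'a tens" where
  "tens_prod X Y = (\<lambda>a b c d. X a b * Y c d)"

definition perm_op :: "'a::comm_ring_1 tens" where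
  "perm_op = (\<lambda>a b c d. if c = b \<and> d = a then 1 else 0)"

text \<open>Product in the algebra gl_m (x) gl_m: (E_ab(x)E_cd)(E_ef(x)E_gh) = d_be d_dg E_af (x) E_ch.\<close>
definition tens_mult :: "nat \<Rightarrow> 'a::comm_ring_1 tens \<Rightarrow> 'a tens \<Rightarrow> 'a tens" where
  "tens_mult m S T = (\<lambda>a b c d. \<Sum>e<m. \<Sum>f<m. S a e c f * T e b f d)"

definition tens_comm :: "nat \<Rightarrow> 'a::comm_ring_1 tens \<Rightarrow> 'a tens \<Rightarrow> 'a tens" where
  "tens_comm m S T = (\<lambda>a b c d. tens_mult m S T a b c d - tens_mult m T S a b c d)"

definition tens_eq :: "nat \<Rightarrow> 'a tens \<Rightarrow> 'a tens \<Rightarrow> bool" where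
  "tens_eq m S T \<longleftrightarrow> (\<forall>a<m. \<forall>b<m. \<forall>c<m. \<forall>d<m. S a b c d = T a b c d)"

definition A_mat :: "nat \<Rightarrow> nat \<Rightarrow> (nat \<Rightarrow> 'a::comm_ring_1 mat) \<Rightarrow> (nat \<Rightarrow> 'a mat) \<Rightarrow> nat \<Rightarrow> 'a mat" where
  "A_mat m r Q P k = (\<lambda>a b. \<Sum>i=0..r-k. mat_mult m (Q i) (P (i + k)) a b)"

end

theory Submission
  imports Defs
begin

text \<open>The entries of the products \<open>Q\<^sub>i P\<^sub>p\<close> satisfy relations of \<open>gl\<^sub>m\<close>-type,
  \<open>{(Q\<^sub>i P\<^sub>p)\<^sub>a\<^sub>b, (Q\<^sub>j P\<^sub>q)\<^sub>c\<^sub>d} = \<delta>\<^sub>p\<^sub>j \<delta>\<^sub>c\<^sub>b (Q\<^sub>i P\<^sub>q)\<^sub>a\<^sub>d - \<delta>\<^sub>q\<^sub>i \<delta>\<^sub>a\<^sub>d (Q\<^sub>j P\<^sub>p)\<^sub>c\<^sub>b\<close>,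
  which follow from the canonical brackets by the Leibniz rule alone. Summing over the diagonals \<open>p = i + k\<close>, \<open>q = j + l\<close> that define \<open>A\<^sub>k\<close> and
  \<open>A\<^sub>l\<close>, the Kronecker deltas keep exactly the terms \<open>Q\<^sub>i P\<^sub>i\<^sub>+\<^sub>k\<^sub>+\<^sub>l\<close> with
  \<open>i + k + l \<le> r\<close>: these add up to \<open>A\<^sub>k\<^sub>+\<^sub>l\<close> if \<open>k + l \<le> r\<close>, and there are none otherwise.\<close>

locale poisson_bracket =
  fixes br :: "'a::comm_ring_1 \<Rightarrow> 'a \<Rightarrow> 'a"
  assumes is_poisson_bracket: "is_poisson_bracket br"
begin

lemma bracket_add_left: "br (x + y) z = br x z + br y z"
  using is_poisson_bracket unfolding is_poisson_bracket_def by blast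

lemma bracket_antisym: "br x y = - br y x"
  using is_poisson_bracket unfolding is_poisson_bracket_def by blast

lemma bracket_mult_right: "br x (y * z) = br x y * z + y * br x z"
  using is_poisson_bracket unfolding is_poisson_bracket_def by blast

lemma bracket_add_right: "br x (y + z) = br x y + br x z"
  by (metis bracket_add_left bracket_antisym minus_add_distrib)

lemma bracket_mult_left: "br (x * y) z = x * br y z + br x z * y"
  using bracket_antisym[of "x * y" z] bracket_antisym[of y z] bracket_antisym[of x z]
  by (simp add: bracket_mult_right algebra_simps)

lemma bracket_sum_left: "br (sum f S) y = (\<Sum>i\<in>S. br (f i) y)"
proof -
  have "br 0 y = 0" using bracket_add_left[of 0 0 y] by simp
  then show ?thesis
    using sum_comp_morphism[of "\<lambda>x. br x y" f S] bracket_add_left by (simp add: o_def)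
qed

lemma bracket_sum_right: "br y (sum f S) = (\<Sum>i\<in>S. br y (f i))"
proof -
  have "br y 0 = 0" using bracket_add_right[of y 0 0] by simp
  then show ?thesis
    using sum_comp_morphism[of "\<lambda>x. br y x" f S] bracket_add_right by (simp add: o_def)
qed

lemma bracket_mult_mult:
  "br (x * y) (z * w) = x * z * br y w + x * br y z * w + z * br x w * y + br x z * w * y"
  by (simp add: bracket_mult_left bracket_mult_right algebra_simps)

end

lemma sum_if_const_cond: "(\<Sum>x\<in>A. if P then f x else 0) = (if P then sum f A else 0)"
  by simp

lemma sum_diagonal_pairs:
  fixes r k l :: nat
  assumes "l \<le> r"
  shows "(\<Sum>i=0..r-k. \<Sum>j=0..r-l. if j = i + k then f i else 0) =
    (\<Sum>i | i + k + l \<le> r. f i :: 'b::comm_monoid_add)"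
proof -
  have "{i \<in> {0..r-k}. i + k \<le> r - l} = {i. i + k + l \<le> r}"
    using assms by auto
  then show ?thesis
    by (simp add: sum.inter_filter[symmetric])
qed

lemma sum_diagonal_pairs':
  fixes r k l :: nat
  assumes "k \<le> r"
  shows "(\<Sum>i=0..r-k. \<Sum>j=0..r-l. if i = j + l then f j else 0) =
    (\<Sum>j | j + k + l \<le> r. f j :: 'b::comm_monoid_add)"
proof -
  have "(\<Sum>i=0..r-k. \<Sum>j=0..r-l. if i = j + l then f j else 0) =
      (\<Sum>j=0..r-l. \<Sum>i=0..r-k. if i = j + l then f j else 0)"
    by (rule sum.swap)
  also have "\<dots> = (\<Sum>j | j + l + k \<le> r. f j)"
    by (rule sum_diagonal_pairs[OF assms])
  finally show ?thesis
    by (simp add: add.assoc add.commute[of l k])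
qed

lemma tens_mult_perm_op_left:
  fixes T :: "'a::comm_ring_1 tens"
  assumes "a < m" "c < m"
  shows "tens_mult m perm_op T a b c d = T c b a d"
proof -
  have "perm_op a e c f * T e b f d = (if f = a then if e = c then T c b a d else 0 else 0)" for e f
    by (auto simp: perm_op_def)
  then show ?thesis
    using assms by (simp add: tens_mult_def sum.delta)
qed

lemma tens_mult_perm_op_right:
  fixes T :: "'a::comm_ring_1 tens"
  assumes "b < m" "d < m"
  shows "tens_mult m T perm_op a b c d = T a d c b"
proof -
  have "T a e c f * perm_op e b f d = (if f = b then if e = d then T a d c b else 0 else 0)" for e f
    by (auto simp: perm_op_def)
  then show ?thesis
    using assms by (simp add: tens_mult_def sum.delta)
qed

lemma tens_comm_perm_op_tens_prod_id:
  fixes X :: "'a::comm_ring_1 mat"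
  assumes "a < m" "b < m" "c < m" "d < m"
  shows "tens_comm m perm_op (tens_prod X mat_id) a b c d =
    (if a = d then X c b else 0) - (if c = b then X a d else 0)"
  using assms
  by (simp add: tens_comm_def tens_mult_perm_op_left tens_mult_perm_op_right tens_prod_def mat_id_def)

locale canonical_coordinates = poisson_bracket br
  for br :: "'a::comm_ring_1 \<Rightarrow> 'a \<Rightarrow> 'a" +
  fixes m r :: nat and Q P :: "nat \<Rightarrow> 'a mat"
  assumes bracket_P_Q_tens: "\<And>i j. i \<le> r \<Longrightarrow> j \<le> r \<Longrightarrow>
      tens_eq m (tens_bracket br (P i) (Q j)) (if i = j then perm_op else (\<lambda>_ _ _ _. 0))"
    and bracket_P_P_tens: "\<And>i j. i \<le> r \<Longrightarrow> j \<le> r \<Longrightarrow>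
      tens_eq m (tens_bracket br (P i) (P j)) (\<lambda>_ _ _ _. 0)"
    and bracket_Q_Q_tens: "\<And>i j. i \<le> r \<Longrightarrow> j \<le> r \<Longrightarrow>
      tens_eq m (tens_bracket br (Q i) (Q j)) (\<lambda>_ _ _ _. 0)"
begin

context
  fixes i j x y u v :: nat
  assumes indices: "i \<le> r" "j \<le> r" "x < m" "y < m" "u < m" "v < m"
begin

lemma bracket_P_Q: "br (P i x y) (Q j u v) = (if i = j \<and> u = y \<and> v = x then 1 else 0)"
  using bracket_P_Q_tens[of i j] indices
  unfolding tens_eq_def tens_bracket_def perm_op_def by (cases "i = j") auto

lemma bracket_Q_P: "br (Q j u v) (P i x y) = (if i = j \<and> u = y \<and> v = x then -1 else 0)"
  using bracket_P_Q bracket_antisym[of "Q j u v" "P i x y"] by simp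

lemma bracket_P_P: "br (P i x y) (P j u v) = 0"
  using bracket_P_P_tens[of i j] indices unfolding tens_eq_def tens_bracket_def by auto

lemma bracket_Q_Q: "br (Q i x y) (Q j u v) = 0"
  using bracket_Q_Q_tens[of i j] indices unfolding tens_eq_def tens_bracket_def by auto

end

lemma bracket_QP_QP:
  assumes "i \<le> r" "p \<le> r" "j \<le> r" "q \<le> r" "a < m" "b < m" "c < m" "d < m"
  shows "br (mat_mult m (Q i) (P p) a b) (mat_mult m (Q j) (P q) c d) =
    (if p = j \<and> c = b then mat_mult m (Q i) (P q) a d else 0) -
    (if q = i \<and> a = d then mat_mult m (Q j) (P p) c b else 0)"
proof -
  define G where "G e = (if p = j \<and> c = b then Q i a e * P q e d else 0) -
    (if q = i \<and> a = d then Q j c e * P p e b else 0)" for e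
  have summand: "br (Q i a e * P p e b) (Q j c f * P q f d) = (if f = e then G e else 0)"
    if "e < m" "f < m" for e f
    using assms that unfolding G_def
    by (simp add: bracket_mult_mult bracket_P_Q bracket_Q_P bracket_P_P bracket_Q_Q)
  have "br (mat_mult m (Q i) (P p) a b) (mat_mult m (Q j) (P q) c d) =
      (\<Sum>e<m. \<Sum>f<m. br (Q i a e * P p e b) (Q j c f * P q f d))"
    unfolding mat_mult_def bracket_sum_left by (simp only: bracket_sum_right)
  also have "\<dots> = (\<Sum>e<m. G e)"
    by (intro sum.cong refl) (simp add: summand)
  also have "\<dots> = (if p = j \<and> c = b then mat_mult m (Q i) (P q) a d else 0) -
      (if q = i \<and> a = d then mat_mult m (Q j) (P p) c b else 0)"
    unfolding G_def mat_mult_def by (simp add: sum_subtractf sum_if_const_cond)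
  finally show ?thesis .
qed

text \<open>\<open>A_mat m r Q P n\<close> is junk for \<open>n > r\<close> (truncated subtraction makes it
  \<open>Q\<^sub>0 P\<^sub>n\<close>), whereas \<open>A_diag n\<close> vanishes there.\<close>

definition A_diag :: "nat \<Rightarrow> 'a mat" where
  "A_diag n a b = (\<Sum>i | i + n \<le> r. mat_mult m (Q i) (P (i + n)) a b)"

lemma A_diag_eq_A_mat: "n \<le> r \<Longrightarrow> A_diag n = A_mat m r Q P n"
proof -
  assume "n \<le> r"
  then have "{i. i + n \<le> r} = {0..r - n}" by auto
  then show ?thesis by (simp add: A_diag_def A_mat_def fun_eq_iff)
qed

lemma A_diag_eq_0: "r < n \<Longrightarrow> A_diag n a b = 0"
  by (simp add: A_diag_def)

lemma bracket_A_A: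
  assumes "k \<le> r" "l \<le> r" "a < m" "b < m" "c < m" "d < m"
  shows "br (A_mat m r Q P k a b) (A_mat m r Q P l c d) =
    (if c = b then A_diag (k + l) a d else 0) - (if a = d then A_diag (k + l) c b else 0)"
proof -
  let ?QP = "\<lambda>i p. mat_mult m (Q i) (P p)"
  have summand: "br (?QP i (i + k) a b) (?QP j (j + l) c d) =
      (if j = i + k then (if c = b then ?QP i (i + k + l) a d else 0) else 0) -
      (if i = j + l then (if a = d then ?QP j (j + l + k) c b else 0) else 0)"
    if "i \<in> {0..r-k}" "j \<in> {0..r-l}" for i j
    using assms that by (auto simp: bracket_QP_QP add.assoc)
  have "br (A_mat m r Q P k a b) (A_mat m r Q P l c d) =
      (\<Sum>i=0..r-k. \<Sum>j=0..r-l. br (?QP i (i + k) a b) (?QP j (j + l) c d))"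
    unfolding A_mat_def bracket_sum_left by (simp only: bracket_sum_right)
  also have "\<dots> = (\<Sum>i=0..r-k. \<Sum>j=0..r-l.
        if j = i + k then (if c = b then ?QP i (i + k + l) a d else 0) else 0) -
      (\<Sum>i=0..r-k. \<Sum>j=0..r-l.
        if i = j + l then (if a = d then ?QP j (j + l + k) c b else 0) else 0)"
    unfolding sum_subtractf[symmetric] by (intro sum.cong refl summand)
  also have "\<dots> = (\<Sum>i | i + k + l \<le> r. if c = b then ?QP i (i + k + l) a d else 0) -
      (\<Sum>j | j + k + l \<le> r. if a = d then ?QP j (j + l + k) c b else 0)"
    unfolding sum_diagonal_pairs[OF \<open>l \<le> r\<close>] sum_diagonal_pairs'[OF \<open>k \<le> r\<close>] ..
  also have "\<dots> = (if c = b then A_diag (k + l) a d else 0) - (if a = d then A_diag (k + l) c b else 0)"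
    by (simp add: sum_if_const_cond A_diag_def add.assoc add.commute[of l k])
  finally show ?thesis .
qed

end

theorem theorem2p5:
  fixes br :: "'a::comm_ring_1 \<Rightarrow> 'a \<Rightarrow> 'a"
    and m r :: nat
    and Q P :: "nat \<Rightarrow> 'a mat"
  assumes "is_poisson_bracket br"
    and "\<And>i j. i \<le> r \<Longrightarrow> j \<le> r \<Longrightarrow>
           tens_eq m (tens_bracket br (P i) (Q j)) (if i = j then perm_op else (\<lambda>_ _ _ _. 0))"
    and "\<And>i j. i \<le> r \<Longrightarrow> j \<le> r \<Longrightarrow> tens_eq m (tens_bracket br (P i) (P j)) (\<lambda>_ _ _ _. 0)"
    and "\<And>i j. i \<le> r \<Longrightarrow> j \<le> r \<Longrightarrow> tens_eq m (tens_bracket br (Q i) (Q j)) (\<lambda>_ _ _ _. 0)"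
    and "k \<le> r" and "l \<le> r"
  shows "tens_eq m (tens_bracket br (A_mat m r Q P k) (A_mat m r Q P l))
           (if k + l \<le> r
            then (\<lambda>a b c d. - tens_comm m perm_op (tens_prod (A_mat m r Q P (k + l)) mat_id) a b c d)
            else (\<lambda>_ _ _ _. 0))"
proof -
  interpret canonical_coordinates br m r Q P
    using assms(1-4) by unfold_locales
  show ?thesis
    unfolding tens_eq_def tens_bracket_def
  proof (intro allI impI)
    fix a b c d
    assume indices: "a < m" "b < m" "c < m" "d < m"
    show "br (A_mat m r Q P k a b) (A_mat m r Q P l c d) = (if k + l \<le> r
        then (\<lambda>a b c d. - tens_comm m perm_op (tens_prod (A_mat m r Q P (k + l)) mat_id) a b c d)
        else (\<lambda>_ _ _ _. 0)) a b c d"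
      using indices assms(5,6)
      by (cases "k + l \<le> r")
        (simp_all add: bracket_A_A tens_comm_perm_op_tens_prod_id A_diag_eq_A_mat A_diag_eq_0)
  qed
qed

end
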